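(* Let $(X,d)$ be a compact metric space and $\mathbb{F}=\{f_n:n\in\mathbb{N}\}$ a sequence of continuous surjective self-maps of $X$, and let $k\in\mathbb{N}$. Then $(X,\mathbb{F}_k)$ is equicontinuous if and only if $(X,\mathbb{F})$ is equicontinuous.
   Context: Write $\omega_n=f_n\circ\cdots\circ f_1$ and, for $n>k$, $\omega^k_n=f_n\circ\cdots\circ f_{k+1}$. $\mathbb{F}_k=\{f_n:n\ge k+1\}$ is the truncated family, generating the system with compositions $\omega^k_n$, $n>k$. $(X,\mathbb{F})$ is equicontinuous if for every $\epsilon>0$ there is $\delta>0$ such that $d(x,y)<\delta$ implies $d(\omega_n(x),\omega_n(y))<\epsilon$ for all $n\in\mathbb{N}$ and all $x,y\in X$; $(X,\mathbb{F}_k)$ is equicontinuous if the same holds with $\omega^k_n$, $n>k$, in place of $\omega_n$. *)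

theory Defs
  imports "HOL-Analysis.Analysis"
begin

text \<open>The maps are indexed from 1: f 1, f 2, ...  (f 0 is unused).
  omega f k n = f n \<circ> ... \<circ> f (k+1) for n > k (and the identity for n \<le> k).
  The composition omega_n of the paper is omega f 0 n.\<close>

primrec omega :: "(nat \<Rightarrow> 'a \<Rightarrow> 'a) \<Rightarrow> nat \<Rightarrow> nat \<Rightarrow> 'a \<Rightarrow> 'a" where
  "omega f k 0 = id"
| "omega f k (Suc n) = (if Suc n \<le> k then id else f (Suc n) \<circ> omega f k n)"

text \<open>Equicontinuity of the truncated system (X, F_k) on the set X:
  uniformly in n > k, the compositions omega f k n are equicontinuous.
  (X, F) itself is the case k = 0.\<close>

definition equicont_from :: "'a::metric_space set \<Rightarrow> (nat \<Rightarrow> 'a \<Rightarrow> 'a) \<Rightarrow> nat \<Rightarrow> bool" where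
  "equicont_from X f k \<longleftrightarrow>
     (\<forall>\<epsilon>>0. \<exists>\<delta>>0. \<forall>x\<in>X. \<forall>y\<in>X. dist x y < \<delta> \<longrightarrow>
        (\<forall>n>k. dist (omega f k n x) (omega f k n y) < \<epsilon>))"

end

theory Submission
  imports Defs
begin

text \<open>If the composition \<open>\<omega>\<^sub>n\<close> from a later starting time \<open>k\<close> is equicontinuous, so is the one from
  time \<open>j \<le> k\<close>: the first \<open>k - j\<close> compositions form a finite, hence uniformly equicontinuous,
  family, and afterwards \<open>\<omega>\<^sup>j\<^sub>n = \<omega>\<^sup>k\<^sub>n \<circ> \<omega>\<^sup>j\<^sub>k\<close>.
  Conversely, by compactness, if \<open>\<omega>\<^sup>j\<^sub>k x\<close> and \<open>\<omega>\<^sup>j\<^sub>k y\<close> are close then \<open>x\<close> and \<open>y\<close> are close to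
  two points with the same image under \<open>\<omega>\<^sup>j\<^sub>k\<close>; since \<open>\<omega>\<^sup>j\<^sub>k\<close> is onto, every pair of close points
  of \<open>X\<close> is of this form, and equicontinuity of \<open>\<omega>\<^sup>j\<^sub>n\<close> transfers to \<open>\<omega>\<^sup>k\<^sub>n\<close>.\<close>

lemma omega_eq_id: "n \<le> k \<Longrightarrow> omega f k n = id"
  by (cases n) auto

lemma omega_trans:
  assumes "j \<le> k" "k \<le> n"
  shows "omega f j n = omega f k n \<circ> omega f j k"
  using assms(2)
proof (induction n)
  case 0
  then show ?case by (simp add: omega_eq_id)
next
  case (Suc m)
  show ?case
  proof (cases "Suc m = k")
    case True
    then show ?thesis by (simp add: omega_eq_id)
  next
    case False
    with Suc show ?thesis using assms(1) by auto
  qed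
qed

lemma
  assumes "\<And>n. n \<ge> 1 \<Longrightarrow> continuous_on X (f n)"
    and "\<And>n. n \<ge> 1 \<Longrightarrow> f n ` X \<subseteq> X"
  shows continuous_on_omega: "continuous_on X (omega f k n)"
    and omega_image_subset: "omega f k n ` X \<subseteq> X"
proof -
  have "continuous_on X (omega f k n) \<and> omega f k n ` X \<subseteq> X"
  proof (induction n)
    case (Suc m)
    have "continuous_on X (f (Suc m) \<circ> omega f k m)"
      using Suc assms(1)[of "Suc m"]
      by (intro continuous_on_compose) (auto elim: continuous_on_subset)
    moreover have "(f (Suc m) \<circ> omega f k m) ` X \<subseteq> X"
      using Suc assms(2)[of "Suc m"] by (auto simp: image_comp[symmetric])
    ultimately show ?case by simp
  qed simp
  then show "continuous_on X (omega f k n)" "omega f k n ` X \<subseteq> X" by auto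
qed

lemma omega_image_eq:
  assumes "\<And>n. n \<ge> 1 \<Longrightarrow> f n ` X = X"
  shows "omega f k n ` X = X"
proof (induction n)
  case (Suc m)
  then show ?case using assms[of "Suc m"] by (simp add: image_comp[symmetric, unfolded comp_def])
qed simp

lemma uniformly_equicontinuous_finite:
  assumes "finite I" "\<And>i. i \<in> I \<Longrightarrow> uniformly_continuous_on X (g i)" "\<epsilon> > 0"
  shows "\<exists>\<delta>>0. \<forall>x\<in>X. \<forall>y\<in>X. dist x y < \<delta> \<longrightarrow> (\<forall>i\<in>I. dist (g i x) (g i y) < \<epsilon>)"
  using assms(1,2)
proof (induction I rule: finite_induct)
  case empty
  show ?case using zero_less_one by blast
next
  case (insert i I)
  then obtain \<delta>\<^sub>I where "\<delta>\<^sub>I > 0" and \<delta>\<^sub>I: "\<forall>x\<in>X. \<forall>y\<in>X. dist x y < \<delta>\<^sub>I \<longrightarrow> (\<forall>i\<in>I. dist (g i x) (g i y) < \<epsilon>)"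
    by blast
  obtain \<delta>\<^sub>i where "\<delta>\<^sub>i > 0" and \<delta>\<^sub>i: "\<forall>x\<in>X. \<forall>y\<in>X. dist y x < \<delta>\<^sub>i \<longrightarrow> dist (g i y) (g i x) < \<epsilon>"
    using insert.prems[of i] \<open>\<epsilon> > 0\<close> unfolding uniformly_continuous_on_def by blast
  show ?case
    using \<open>\<delta>\<^sub>I > 0\<close> \<open>\<delta>\<^sub>i > 0\<close> \<delta>\<^sub>I \<delta>\<^sub>i by (intro exI[of _ "min \<delta>\<^sub>I \<delta>\<^sub>i"]) auto
qed

lemma compact_near_common_fibre:
  fixes g :: "'a::metric_space \<Rightarrow> 'b::metric_space"
  assumes "compact X" "continuous_on X g" "\<eta> > 0"
  obtains \<delta> where "\<delta> > 0"
    "\<And>u v. u \<in> X \<Longrightarrow> v \<in> X \<Longrightarrow> dist (g u) (g v) < \<delta> \<Longrightarrow>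
       \<exists>u'\<in>X. \<exists>v'\<in>X. g u' = g v' \<and> dist u u' < \<eta> \<and> dist v v' < \<eta>"
proof -
  text \<open>\<open>K\<close> consists of the pairs that are not \<open>\<eta>\<close>-close to any pair in a common fibre; on the
    compact set \<open>K\<close> the continuous function \<open>h\<close> is positive, so its minimum is a suitable \<open>\<delta>\<close>.\<close>
  define R where "R = {q \<in> X \<times> X. g (fst q) = g (snd q)}"
  define N where "N = (\<Union>q\<in>R. ball (fst q) \<eta> \<times> ball (snd q) \<eta>)"
  define K where "K = X \<times> X - N"
  define h where "h = (\<lambda>p. dist (g (fst p)) (g (snd p)))"
  have "open N"
    unfolding N_def by (intro open_UN ballI open_Times open_ball)
  then have "compact K"
    unfolding K_def using assms(1) by (intro compact_diff compact_Times)
  have "continuous_on (X \<times> X) (\<lambda>p. g (fst p))" "continuous_on (X \<times> X) (\<lambda>p. g (snd p))"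
    by (auto intro!: continuous_on_compose2[OF assms(2)] continuous_intros)
  then have "continuous_on K h"
    unfolding h_def K_def by (auto intro!: continuous_on_dist elim: continuous_on_subset)
  have h_pos: "h p > 0" if "p \<in> K" for p
  proof -
    have "p \<notin> R"
      using that \<open>\<eta> > 0\<close> by (auto simp: K_def N_def)
    then show ?thesis
      using that by (auto simp: h_def R_def K_def)
  qed
  obtain \<delta> where "\<delta> > 0" and \<delta>: "\<And>p. p \<in> K \<Longrightarrow> \<delta> \<le> h p"
  proof (cases "K = {}")
    case False
    then obtain p where "p \<in> K" "\<forall>q\<in>K. h p \<le> h q"
      using continuous_attains_inf[OF \<open>compact K\<close> _ \<open>continuous_on K h\<close>] by blast
    then show ?thesis using that h_pos by blast
  qed (use that zero_less_one in blast)
  show ?thesis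
  proof (rule that[OF \<open>\<delta> > 0\<close>])
    fix u v assume "u \<in> X" "v \<in> X" "dist (g u) (g v) < \<delta>"
    then have "(u, v) \<in> N"
      using \<delta>[of "(u, v)"] by (force simp: K_def h_def)
    then show "\<exists>u'\<in>X. \<exists>v'\<in>X. g u' = g v' \<and> dist u u' < \<eta> \<and> dist v v' < \<eta>"
      by (auto simp: N_def R_def dist_commute)
  qed
qed

lemma equicont_from_lower_start:
  assumes "compact X" "j \<le> k"
    and "\<And>n. n \<ge> 1 \<Longrightarrow> continuous_on X (f n)"
    and "\<And>n. n \<ge> 1 \<Longrightarrow> f n ` X \<subseteq> X"
    and "equicont_from X f k"
  shows "equicont_from X f j"
  unfolding equicont_from_def
proof (intro allI impI)
  fix \<epsilon> :: real assume "\<epsilon> > 0"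
  then obtain \<delta>\<^sub>k where "\<delta>\<^sub>k > 0" and \<delta>\<^sub>k: "\<forall>x\<in>X. \<forall>y\<in>X. dist x y < \<delta>\<^sub>k \<longrightarrow>
      (\<forall>n>k. dist (omega f k n x) (omega f k n y) < \<epsilon>)"
    using assms(5) unfolding equicont_from_def by blast
  have "uniformly_continuous_on X (omega f j n)" for n
    using compact_uniformly_continuous[OF continuous_on_omega[where f=f and X=X, OF assms(3,4)] assms(1)] .
  moreover have "min \<epsilon> \<delta>\<^sub>k > 0"
    using \<open>\<epsilon> > 0\<close> \<open>\<delta>\<^sub>k > 0\<close> by simp
  ultimately obtain \<delta> where "\<delta> > 0" and \<delta>: "\<forall>x\<in>X. \<forall>y\<in>X. dist x y < \<delta> \<longrightarrow>
      (\<forall>n\<in>{..k}. dist (omega f j n x) (omega f j n y) < min \<epsilon> \<delta>\<^sub>k)"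
    using uniformly_equicontinuous_finite[of "{..k}" X "omega f j"] by blast
  have "dist (omega f j n x) (omega f j n y) < \<epsilon>"
    if "x \<in> X" "y \<in> X" "dist x y < \<delta>" for x y n
  proof (cases "n \<le> k")
    case True
    then show ?thesis using \<delta> that by auto
  next
    case False
    have "dist (omega f j k x) (omega f j k y) < \<delta>\<^sub>k"
      using \<delta> that by auto
    moreover have "omega f j k x \<in> X" "omega f j k y \<in> X"
      using omega_image_subset[where f=f and X=X, OF assms(3,4)] that by blast+
    ultimately have "dist (omega f k n (omega f j k x)) (omega f k n (omega f j k y)) < \<epsilon>"
      using \<delta>\<^sub>k False by simp
    then show ?thesis
      using omega_trans[OF assms(2), of n f] False by simp
  qed
  then show "\<exists>\<delta>>0. \<forall>x\<in>X. \<forall>y\<in>X. dist x y < \<delta> \<longrightarrow> (\<forall>n>j. dist (omega f j n x) (omega f j n y) < \<epsilon>)"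
    using \<open>\<delta> > 0\<close> by blast
qed

lemma equicont_from_higher_start:
  assumes "compact X" "j \<le> k"
    and "\<And>n. n \<ge> 1 \<Longrightarrow> continuous_on X (f n)"
    and "\<And>n. n \<ge> 1 \<Longrightarrow> f n ` X = X"
    and "equicont_from X f j"
  shows "equicont_from X f k"
  unfolding equicont_from_def
proof (intro allI impI)
  fix \<epsilon> :: real assume "\<epsilon> > 0"
  then have "\<epsilon> / 2 > 0" by simp
  then obtain \<eta> where "\<eta> > 0" and \<eta>: "\<forall>x\<in>X. \<forall>y\<in>X. dist x y < \<eta> \<longrightarrow>
      (\<forall>n>j. dist (omega f j n x) (omega f j n y) < \<epsilon> / 2)"
    using assms(5) unfolding equicont_from_def by blast
  have "continuous_on X (omega f j k)"
    using assms(3,4) by (intro continuous_on_omega) auto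
  then obtain \<delta> where "\<delta> > 0" and \<delta>: "\<And>u v. u \<in> X \<Longrightarrow> v \<in> X \<Longrightarrow>
      dist (omega f j k u) (omega f j k v) < \<delta> \<Longrightarrow>
      \<exists>u'\<in>X. \<exists>v'\<in>X. omega f j k u' = omega f j k v' \<and> dist u u' < \<eta> \<and> dist v v' < \<eta>"
    using compact_near_common_fibre[OF assms(1) _ \<open>\<eta> > 0\<close>] by blast
  have "dist (omega f k n x) (omega f k n y) < \<epsilon>"
    if "x \<in> X" "y \<in> X" and close: "dist x y < \<delta>" and "n > k" for x y n
  proof -
    have onto: "omega f j k ` X = X"
      using omega_image_eq[where f=f and X=X, OF assms(4)] .
    obtain u v where "u \<in> X" "v \<in> X" and x: "x = omega f j k u" and y: "y = omega f j k v"
      using \<open>x \<in> X\<close> \<open>y \<in> X\<close> onto by (metis imageE)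
    then obtain u' v' where "u' \<in> X" "v' \<in> X" and fibre: "omega f j k u' = omega f j k v'"
        and "dist u u' < \<eta>" "dist v v' < \<eta>"
      using \<delta> close by blast
    have split: "omega f j n z = omega f k n (omega f j k z)" for z
      using omega_trans[OF assms(2), of n f] \<open>n > k\<close> by simp
    have "n > j" using \<open>n > k\<close> assms(2) by simp
    then have "dist (omega f j n u) (omega f j n u') < \<epsilon> / 2"
        "dist (omega f j n v) (omega f j n v') < \<epsilon> / 2"
      using \<eta> \<open>u \<in> X\<close> \<open>v \<in> X\<close> \<open>u' \<in> X\<close> \<open>v' \<in> X\<close> \<open>dist u u' < \<eta>\<close> \<open>dist v v' < \<eta>\<close> by blast+
    moreover have "omega f j n u' = omega f j n v'"
      using split fibre by simp
    ultimately have "dist (omega f j n u) (omega f j n v) < \<epsilon>"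
      using dist_triangle_half_l[of "omega f j n u" "omega f j n u'" \<epsilon> "omega f j n v"]
      by (simp add: dist_commute)
    then show ?thesis
      using split x y by simp
  qed
  then show "\<exists>\<delta>>0. \<forall>x\<in>X. \<forall>y\<in>X. dist x y < \<delta> \<longrightarrow> (\<forall>n>k. dist (omega f k n x) (omega f k n y) < \<epsilon>)"
    using \<open>\<delta> > 0\<close> by blast
qed

theorem mainTheorem2:
  fixes X :: "'a::metric_space set" and f :: "nat \<Rightarrow> 'a \<Rightarrow> 'a" and k :: nat
  assumes "compact X"
    and "\<And>n. n \<ge> 1 \<Longrightarrow> continuous_on X (f n)"
    and "\<And>n. n \<ge> 1 \<Longrightarrow> f n ` X = X"
  shows "equicont_from X f k \<longleftrightarrow> equicont_from X f 0"
proof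
  show "equicont_from X f k \<Longrightarrow> equicont_from X f 0"
    by (rule equicont_from_lower_start[OF assms(1) le0 assms(2)]) (simp_all add: assms(3))
  show "equicont_from X f 0 \<Longrightarrow> equicont_from X f k"
    by (rule equicont_from_higher_start[OF assms(1) le0 assms(2,3)])
qed

end
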